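(* Let $g_1,\dots,g_r\in\mathbb R[X_1,\dots,X_n]$ satisfy $1-\|\mathbf X\|_2^2\in\mathcal Q(\mathbf g)$ and $\|g_i\|\le\tfrac12$, with $S=\mathcal S(\mathbf g)\neq\emptyset$. Let $\mathfrak c,\textit{Ł}>0$ be such that $D(x)^{\textit{Ł}}\le\mathfrak c\,G(x)$ for all $x\in[-1,1]^n$. Let $f\in\mathbb R[\mathbf X]$ of degree $d$ with $f^*=\min_Sf>0$, and assume there exists $x\in[-1,1]^n\setminus S$ with $f(x)\le0$. Let $A=\{x\in[-1,1]^n: f(x)\le\frac{3f^*}4\}$. Then for all $x\in A$, $$G(x)\ge\delta:=\frac1{\mathfrak c}\Big(\frac{\epsilon(f)}{8d^2}\Big)^{\textit{Ł}}.$$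
   Context: $\Sigma^2$ sums of squares, $\mathcal S(\mathbf g)=\{x:g_i(x)\ge0\ \forall i\}$, $\mathcal Q(\mathbf g)=\Sigma^2+\sum_i\Sigma^2g_i$, $\|h\|=\max_{[-1,1]^n}|h|$, $\epsilon(f)=f^*/\|f\|$, $G(x)=|\min\{g_1(x),\dots,g_r(x),0\}|$, $D(x)=\operatorname{dist}(x,S)$ (Euclidean), both on $[-1,1]^n$. *)

theory Defs
  imports "HOL-Analysis.Analysis" "HOL-Library.Poly_Mapping"
begin

text \<open>Real polynomials in the variables X_i, i ranging over the finite type 'n
  (so n = CARD('n)): finitely supported maps from exponent vectors to coefficients.\<close>
type_synonym 'n mpoly = "('n \<Rightarrow>\<^sub>0 nat) \<Rightarrow>\<^sub>0 real"

definition mpvar :: "'n \<Rightarrow> 'n mpoly" where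
  "mpvar i = Poly_Mapping.single (Poly_Mapping.single i 1) 1"

definition mpeval :: "'n::finite mpoly \<Rightarrow> real^'n \<Rightarrow> real" where
  "mpeval p x = (\<Sum>a\<in>Poly_Mapping.keys p. Poly_Mapping.lookup p a * (\<Prod>i\<in>UNIV. (x $ i) ^ Poly_Mapping.lookup a i))"

definition mpdeg :: "'n mpoly \<Rightarrow> nat" where
  "mpdeg p = Max (insert 0 ((\<lambda>a. \<Sum>i\<in>Poly_Mapping.keys a. Poly_Mapping.lookup a i) ` Poly_Mapping.keys p))"

definition sos :: "'n mpoly set" where
  "sos = {p. \<exists>qs. p = (\<Sum>q\<leftarrow>qs. q * q)}"

definition qmodule :: "(nat \<Rightarrow> 'n mpoly) \<Rightarrow> nat \<Rightarrow> 'n mpoly set" where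
  "qmodule g r = {p. \<exists>s. (\<forall>i\<le>r. s i \<in> sos) \<and> p = s r + (\<Sum>i<r. s i * g i)}"

definition basic_sa :: "(nat \<Rightarrow> 'n::finite mpoly) \<Rightarrow> nat \<Rightarrow> (real^'n) set" where
  "basic_sa g r = {x. \<forall>i<r. mpeval (g i) x \<ge> 0}"

definition box :: "(real^'n) set" where
  "box = {x. \<forall>i. \<bar>x $ i\<bar> \<le> 1}"

definition supnorm :: "'n::finite mpoly \<Rightarrow> real" where
  "supnorm h = (SUP x\<in>box. \<bar>mpeval h x\<bar>)"

definition Gfun :: "(nat \<Rightarrow> 'n::finite mpoly) \<Rightarrow> nat \<Rightarrow> real^'n \<Rightarrow> real" where
  "Gfun g r x = \<bar>Min (insert 0 ((\<lambda>i. mpeval (g i) x) ` {..<r}))\<bar>"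

end

theory Submission
  imports Defs "HOL-Computational_Algebra.Polynomial"
begin

(* Markov's inequality, in the form |q'(0)| <= 2 n^2 max_[0,1] |q| for deg q <= n, bounds every
   directional derivative of f at a point z of the box in a direction u - z pointing to the box,
   hence (by linearity in the direction) f is Lipschitz on [-1,1]^n with constant 2 d^2 ||f||.
   The Archimedean certificate puts S inside the unit ball, where f >= f*; so a point of A, where
   f <= 3f*/4, is at distance at least f*/(8 d^2 ||f||) = epsilon(f)/(8 d^2) from S, and the
   Lojasiewicz inequality turns this into the lower bound on G.
   Markov's inequality itself comes from the Chebyshev polynomial T_n: if |p| < 1 on [-1,1], then
   T_n - p alternates in sign at the n+1 extrema cos(k pi/n) of T_n, so it has n roots below 1,
   and Rolle's theorem leaves its derivative no room to vanish on [largest root, 1]. *)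

fun chebyshev :: "nat \<Rightarrow> real poly" where
  "chebyshev 0 = 1"
| "chebyshev (Suc 0) = [:0, 1:]"
| "chebyshev (Suc (Suc n)) = [:0, 2:] * chebyshev (Suc n) - chebyshev n"

lemma poly_chebyshev_cos: "poly (chebyshev n) (cos t) = cos (real n * t)"
proof (induction n rule: chebyshev.induct)
  case (3 n)
  have "cos (real (Suc (Suc n)) * t) = 2 * cos t * cos (real (Suc n) * t) - cos (real n * t)"
    using cos_add[of "real (Suc n) * t" t] cos_diff[of "real (Suc n) * t" t]
    by (simp add: algebra_simps)
  with 3 show ?case by simp
qed auto

lemma degree_chebyshev_le: "degree (chebyshev n) \<le> n"
proof (induction n rule: chebyshev.induct)
  case (3 n)
  have "degree ([:0, 2:] * chebyshev (Suc n)) \<le> Suc (Suc n)"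
    using degree_mult_le[of "[:0, 2:]" "chebyshev (Suc n)"] 3(1) by simp
  with 3(2) show ?case by (simp add: degree_diff_le)
qed auto

lemma chebyshev_at_1: "poly (chebyshev n) 1 = 1 \<and> poly (pderiv (chebyshev n)) 1 = real n ^ 2"
  by (induction n rule: chebyshev.induct)
    (auto simp: pderiv_mult pderiv_diff pderiv_pCons pderiv_smult algebra_simps power2_eq_square)

lemma Rolle_roots_pderiv:
  fixes h :: "real poly"
  assumes "finite R" "R \<noteq> {}" "\<And>x. x \<in> R \<Longrightarrow> poly h x = 0"
  shows "\<exists>R'. finite R' \<and> card R' = card R - 1 \<and>
    (\<forall>x\<in>R'. poly (pderiv h) x = 0 \<and> x < Max R)"
  using assms
proof (induction R rule: finite_linorder_max_induct)
  case (insert b A)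
  have Max_eq: "Max (insert b A) = b" using insert.hyps by (intro Max_eqI) auto
  show ?case
  proof (cases "A = {}")
    case True
    then show ?thesis by (intro exI[of _ "{}"]) auto
  next
    case False
    with insert obtain R' where R': "finite R'" "card R' = card A - 1"
      "\<forall>x\<in>R'. poly (pderiv h) x = 0 \<and> x < Max A" by auto
    have "Max A < b" using False insert.hyps by simp
    moreover have "poly h (Max A) = 0" "poly h b = 0"
      using insert.prems(2) False insert.hyps(1) by auto
    ultimately obtain c where c: "Max A < c" "c < b" "poly (pderiv h) c = 0"
      using poly_MVT[of "Max A" b h] by auto
    have "c \<notin> R'" using R'(3) c(1) by force
    moreover have "card A \<ge> 1" using False insert.hyps(1) by (simp add: Suc_le_eq card_gt_0_iff)
    ultimately show ?thesis using R' c insert.hyps Max_eq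
      by (intro exI[of _ "insert c R'"]) auto
  qed
qed simp

lemma pderiv_pos_right_of_roots:
  fixes h :: "real poly"
  assumes R: "finite R" "R \<noteq> {}" "\<And>x. x \<in> R \<Longrightarrow> poly h x = 0"
    and deg: "degree h \<le> card R" and b: "Max R < b" "poly h b > 0"
  shows "poly (pderiv h) b > 0"
proof -
  define a where "a = Max R"
  have ha: "poly h a = 0" using R by (simp add: a_def)
  obtain c where c: "a < c" "c < b" "poly (pderiv h) c > 0"
    using poly_MVT[of a b h] b ha by (auto simp: a_def zero_less_mult_iff)
  have nz: "pderiv h \<noteq> 0" using c by auto
  obtain R' where R': "finite R'" "card R' = card R - 1"
    "\<And>x. x \<in> R' \<Longrightarrow> poly (pderiv h) x = 0 \<and> x < a"
    using Rolle_roots_pderiv[OF R] unfolding a_def by blast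
  have no_root: "poly (pderiv h) t \<noteq> 0" if "a \<le> t" "t \<le> b" for t
  proof
    assume t: "poly (pderiv h) t = 0"
    have "t \<notin> R'" using R'(3) that by force
    then have "card R = card (insert t R')" using R'(1,2) R(1,2) by (simp add: Suc_diff_1 card_gt_0_iff)
    also have "\<dots> \<le> card {x. poly (pderiv h) x = 0}"
      using R' t poly_roots_finite[OF nz] by (intro card_mono) auto
    also have "\<dots> \<le> degree h - 1"
      using card_poly_roots_bound[OF nz] by (simp add: degree_pderiv)
    finally show False using deg card_gt_0_iff[of R] R(1,2) by linarith
  qed
  show ?thesis
  proof (rule ccontr)
    assume "\<not> ?thesis"
    then have "poly (pderiv h) b < 0" using no_root[of b] c by force
    then obtain t where "c < t" "t < b" "poly (pderiv h) t = 0"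
      using poly_IVT_neg[of c b "pderiv h"] c by blast
    with no_root[of t] c show False by auto
  qed
qed

lemma alternating_signs_roots:
  fixes h :: "real poly" and \<xi> :: "nat \<Rightarrow> real"
  assumes decr: "\<And>i j. i < j \<Longrightarrow> j \<le> n \<Longrightarrow> \<xi> j < \<xi> i"
    and sign: "\<And>k. k \<le> n \<Longrightarrow> (-1) ^ k * poly h (\<xi> k) > 0"
  obtains R where "finite R" "card R = n" "\<And>x. x \<in> R \<Longrightarrow> poly h x = 0 \<and> x < \<xi> 0"
proof -
  have "\<exists>x. \<xi> k < x \<and> x < \<xi> (k - 1) \<and> poly h x = 0" if k: "k \<in> {1..n}" for k
  proof -
    have "(-1) ^ k * (-1) ^ (k - 1) = (-1 :: real)"
      using k by (cases k) auto
    then have "((-1) ^ k * poly h (\<xi> k)) * ((-1) ^ (k - 1) * poly h (\<xi> (k - 1)))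
        = - (poly h (\<xi> k) * poly h (\<xi> (k - 1)))"
      by (simp add: algebra_simps)
    moreover have "((-1) ^ k * poly h (\<xi> k)) * ((-1) ^ (k - 1) * poly h (\<xi> (k - 1))) > 0"
      using mult_pos_pos[OF sign[of k] sign[of "k - 1"]] k by auto
    ultimately have "poly h (\<xi> k) * poly h (\<xi> (k - 1)) < 0" by linarith
    moreover have "\<xi> k < \<xi> (k - 1)" using k by (intro decr) auto
    ultimately show ?thesis using poly_IVT[of "\<xi> k" "\<xi> (k - 1)" h] by blast
  qed
  then obtain r where
    r: "\<And>k. k \<in> {1..n} \<Longrightarrow> \<xi> k < r k \<and> r k < \<xi> (k - 1) \<and> poly h (r k) = 0"
    by metis
  have \<xi>_le: "\<xi> j \<le> \<xi> i" if "i \<le> j" "j \<le> n" for i j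
    using decr[of i j] that by (cases "i = j") auto
  have "r j < r i" if "i < j" "i \<in> {1..n}" "j \<in> {1..n}" for i j
    using r[of i] r[of j] \<xi>_le[of i "j - 1"] that by force
  then have "inj_on r {1..n}"
    by (metis inj_onI linorder_neqE_nat order_less_irrefl)
  moreover have "r k < \<xi> 0" if "k \<in> {1..n}" for k
    using r[OF that] \<xi>_le[of 0 "k - 1"] that by force
  ultimately show ?thesis
    using r by (intro that[of "r ` {1..n}"]) (auto simp: card_image)
qed

lemma markov_inequality_strict:
  fixes p :: "real poly"
  assumes n: "n \<ge> 1" and deg: "degree p \<le> n"
    and bnd: "\<And>t. -1 \<le> t \<Longrightarrow> t \<le> 1 \<Longrightarrow> \<bar>poly p t\<bar> < 1"
  shows "poly (pderiv p) 1 < real n ^ 2"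
proof -
  define \<xi> where "\<xi> k = cos (real k * pi / real n)" for k
  define h where "h = chebyshev n - p"
  have decr: "\<xi> j < \<xi> i" if "i < j" "j \<le> n" for i j
    unfolding \<xi>_def
  proof (rule cos_monotone_0_pi)
    show "0 \<le> real i * pi / real n" by simp
    show "real i * pi / real n < real j * pi / real n"
      using that n by (intro divide_strict_right_mono mult_strict_right_mono) auto
    have "real j * pi / real n \<le> real n * pi / real n"
      using that by (intro divide_right_mono mult_right_mono) auto
    then show "real j * pi / real n \<le> pi" using n by simp
  qed
  have cheb: "poly (chebyshev n) (\<xi> k) = (-1) ^ k" for k
  proof -
    have "real n * (real k * pi / real n) = real k * pi" using n by simp
    then show ?thesis by (simp add: \<xi>_def poly_chebyshev_cos)
  qed
  have sign: "(-1) ^ k * poly h (\<xi> k) > 0" for k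
  proof -
    have "(-1) ^ k * poly h (\<xi> k) = 1 - (-1) ^ k * poly p (\<xi> k)"
      by (simp add: h_def cheb right_diff_distrib flip: power_mult_distrib)
    moreover have "\<bar>poly p (\<xi> k)\<bar> < 1" using bnd by (simp add: \<xi>_def)
    ultimately show ?thesis by (cases "even k") auto
  qed
  obtain R where R: "finite R" "card R = n" "\<And>x. x \<in> R \<Longrightarrow> poly h x = 0 \<and> x < \<xi> 0"
    using alternating_signs_roots[of n \<xi> h, OF decr sign] by metis
  have "R \<noteq> {}" using R(2) n by auto
  moreover have "degree h \<le> card R"
    using R(2) deg degree_chebyshev_le[of n] by (simp add: h_def degree_diff_le)
  moreover have "poly h 1 > 0" using bnd[of 1] chebyshev_at_1[of n] by (simp add: h_def)
  ultimately have "poly (pderiv h) 1 > 0"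
    using R by (intro pderiv_pos_right_of_roots[of R]) (auto simp: \<xi>_def)
  then show ?thesis using chebyshev_at_1[of n] by (simp add: h_def pderiv_diff)
qed

lemma markov_inequality:
  fixes p :: "real poly"
  assumes deg: "degree p \<le> n"
    and bnd: "\<And>t. -1 \<le> t \<Longrightarrow> t \<le> 1 \<Longrightarrow> \<bar>poly p t\<bar> \<le> M"
  shows "\<bar>poly (pderiv p) 1\<bar> \<le> real n ^ 2 * M"
proof (cases "n = 0")
  case True
  then have "pderiv p = 0" using deg by (simp add: pderiv_eq_0_iff)
  then show ?thesis using bnd[of 0] by simp
next
  case False
  show ?thesis
  proof (rule dense_ge)
    fix y assume y: "real n ^ 2 * M < y"
    define M' where "M' = y / real n ^ 2"
    have "0 \<le> M" using bnd[of 0] by linarith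
    then have M': "M < M'" "0 < M'"
      using y False by (auto simp: M'_def field_simps intro: le_less_trans[rotated])
    have "\<bar>poly (smult (s / M') p) t\<bar> < 1" if "\<bar>s\<bar> = 1" "-1 \<le> t" "t \<le> 1" for s t
      using bnd[OF that(2,3)] M' that(1) by (simp add: abs_mult)
    then have "poly (pderiv (smult (s / M') p)) 1 < real n ^ 2" if "\<bar>s\<bar> = 1" for s
      using False deg that by (intro markov_inequality_strict) auto
    from this[of 1] this[of "-1"] have "\<bar>poly (pderiv p) 1 / M'\<bar> < real n ^ 2"
      by (auto simp: pderiv_smult pderiv_minus abs_less_iff)
    then have "\<bar>poly (pderiv p) 1\<bar> < real n ^ 2 * M'" using M' by (simp add: divide_less_eq)
    then show "\<bar>poly (pderiv p) 1\<bar> \<le> y" using False by (simp add: M'_def)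
  qed
qed

lemma markov_inequality_unit_interval:
  fixes q :: "real poly"
  assumes deg: "degree q \<le> n"
    and bnd: "\<And>t. 0 \<le> t \<Longrightarrow> t \<le> 1 \<Longrightarrow> \<bar>poly q t\<bar> \<le> M"
  shows "\<bar>poly (pderiv q) 0\<bar> \<le> 2 * real n ^ 2 * M"
proof -
  define p where "p = pcompose q [:1/2, -1/2:]"
  have "degree p \<le> n" using degree_pcompose_le[of q "[:1/2, -1/2:]"] deg by (simp add: p_def)
  moreover have "\<bar>poly p t\<bar> \<le> M" if "-1 \<le> t" "t \<le> 1" for t
    using bnd[of "1/2 - t/2"] that by (simp add: p_def poly_pcompose)
  ultimately have "\<bar>poly (pderiv p) 1\<bar> \<le> real n ^ 2 * M" by (rule markov_inequality)
  moreover have "poly (pderiv p) 1 = - poly (pderiv q) 0 / 2"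
    by (simp add: p_def pderiv_pcompose poly_pcompose pderiv_pCons)
  ultimately show ?thesis by simp
qed

definition mpmonom :: "('n \<Rightarrow>\<^sub>0 nat) \<Rightarrow> real^'n::finite \<Rightarrow> real" where
  "mpmonom a x = (\<Prod>i\<in>UNIV. (x $ i) ^ Poly_Mapping.lookup a i)"

lemma mpeval_eq_sum_mpmonom:
  "mpeval p x = (\<Sum>a\<in>Poly_Mapping.keys p. Poly_Mapping.lookup p a * mpmonom a x)"
  by (simp add: mpeval_def mpmonom_def)

lemma mpeval_eq_sum_superset:
  assumes "finite A" "Poly_Mapping.keys p \<subseteq> A"
  shows "mpeval p x = (\<Sum>a\<in>A. Poly_Mapping.lookup p a * mpmonom a x)"
  unfolding mpeval_eq_sum_mpmonom
  by (rule sum.mono_neutral_left) (use assms in \<open>auto simp: in_keys_iff\<close>)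

lemma mpmonom_add: "mpmonom (a + b) x = mpmonom a x * mpmonom b x"
  by (simp add: mpmonom_def lookup_add power_add prod.distrib)

lemma mpeval_0 [simp]: "mpeval 0 x = 0"
  by (simp add: mpeval_def)

lemma mpeval_single: "mpeval (Poly_Mapping.single a c) x = c * mpmonom a x"
  by (simp add: mpeval_eq_sum_mpmonom)

lemma mpeval_1 [simp]: "mpeval 1 x = 1"
  using mpeval_single[of 0 1 x] by (simp add: mpmonom_def)

lemma mpeval_mpvar [simp]: "mpeval (mpvar i) x = x $ i"
proof -
  have "mpmonom (Poly_Mapping.single i 1) x = (\<Prod>j\<in>UNIV. if j = i then x $ j else 1)"
    unfolding mpmonom_def by (intro prod.cong) (auto simp: lookup_single when_def)
  then show ?thesis by (simp add: mpvar_def mpeval_single)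
qed

lemma mpeval_add: "mpeval (p + q) x = mpeval p x + mpeval q x"
proof -
  let ?A = "Poly_Mapping.keys p \<union> Poly_Mapping.keys q"
  have "mpeval (p + q) x = (\<Sum>a\<in>?A. Poly_Mapping.lookup (p + q) a * mpmonom a x)"
    using keys_add[of p q] by (intro mpeval_eq_sum_superset) auto
  also have "\<dots> = (\<Sum>a\<in>?A. Poly_Mapping.lookup p a * mpmonom a x)
      + (\<Sum>a\<in>?A. Poly_Mapping.lookup q a * mpmonom a x)"
    by (simp add: lookup_add algebra_simps sum.distrib)
  also have "\<dots> = mpeval p x + mpeval q x"
    by (subst (1 2) mpeval_eq_sum_superset[of ?A]) auto
  finally show ?thesis .
qed

lemma mpeval_sum: "mpeval (\<Sum>i\<in>I. p i) x = (\<Sum>i\<in>I. mpeval (p i) x)"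
  by (induction I rule: infinite_finite_induct) (auto simp: mpeval_add)

lemma mpeval_diff: "mpeval (p - q) x = mpeval p x - mpeval q x"
  using mpeval_add[of "p - q" q x] by simp

lemma poly_mapping_sum_single:
  "p = (\<Sum>a\<in>Poly_Mapping.keys p. Poly_Mapping.single a (Poly_Mapping.lookup p a))"
proof (rule poly_mapping_eqI)
  fix k
  show "Poly_Mapping.lookup p k = Poly_Mapping.lookup
      (\<Sum>a\<in>Poly_Mapping.keys p. Poly_Mapping.single a (Poly_Mapping.lookup p a)) k"
    by (cases "k \<in> Poly_Mapping.keys p") (auto simp: lookup_sum lookup_single when_def in_keys_iff)
qed

lemma mpeval_mult: "mpeval (p * q) x = mpeval p x * mpeval q x"
proof -
  have "p * q = (\<Sum>a\<in>Poly_Mapping.keys p. \<Sum>b\<in>Poly_Mapping.keys q.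
      Poly_Mapping.single (a + b) (Poly_Mapping.lookup p a * Poly_Mapping.lookup q b))"
    by (subst (1) poly_mapping_sum_single, subst (1) poly_mapping_sum_single[of q])
      (simp add: sum_product mult_single)
  then show ?thesis
    by (simp add: mpeval_sum mpeval_single mpeval_eq_sum_mpmonom[of p] mpeval_eq_sum_mpmonom[of q]
        mpmonom_add sum_product algebra_simps)
qed

lemma mpeval_sos_nonneg:
  fixes q :: "'n::finite mpoly"
  shows "q \<in> sos \<Longrightarrow> mpeval q x \<ge> 0"
proof -
  have "mpeval (\<Sum>q\<leftarrow>qs. q * q) x \<ge> 0" for qs :: "'n mpoly list"
    by (induction qs) (auto simp: mpeval_add mpeval_mult)
  then show "q \<in> sos \<Longrightarrow> mpeval q x \<ge> 0" by (auto simp: sos_def)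
qed

lemma mpeval_qmodule_nonneg:
  assumes "p \<in> qmodule g r" "x \<in> basic_sa g r"
  shows "mpeval p x \<ge> 0"
proof -
  obtain s where s: "\<forall>i\<le>r. s i \<in> sos" "p = s r + (\<Sum>i<r. s i * g i)"
    using assms(1) by (auto simp: qmodule_def)
  then show ?thesis
    using assms(2) by (auto simp: mpeval_add mpeval_sum mpeval_mult basic_sa_def mpeval_sos_nonneg
        intro!: add_nonneg_nonneg sum_nonneg mult_nonneg_nonneg)
qed

lemma basic_sa_subset_box:
  assumes "1 - (\<Sum>i\<in>UNIV. mpvar i * mpvar i) \<in> qmodule g r"
  shows "basic_sa g r \<subseteq> box"
proof
  fix x assume "x \<in> basic_sa g r"
  from mpeval_qmodule_nonneg[OF assms this]
  have sum_le: "(\<Sum>i\<in>UNIV. (x $ i)^2) \<le> 1"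
    by (simp add: mpeval_diff mpeval_sum mpeval_mult power2_eq_square)
  show "x \<in> box" unfolding box_def
  proof safe
    fix i
    have "(x $ i)^2 \<le> (\<Sum>i\<in>UNIV. (x $ i)^2)" by (rule member_le_sum) auto
    with sum_le show "\<bar>x $ i\<bar> \<le> 1" using abs_square_le_1[of "x $ i"] by linarith
  qed
qed

lemma abs_mpeval_le_coeffs:
  assumes "x \<in> box"
  shows "\<bar>mpeval f x\<bar> \<le> (\<Sum>a\<in>Poly_Mapping.keys f. \<bar>Poly_Mapping.lookup f a\<bar>)"
proof -
  have "\<bar>mpmonom a x\<bar> \<le> 1" for a
    using assms unfolding mpmonom_def abs_prod power_abs
    by (intro prod_le_1) (auto simp: box_def power_le_one)
  then have "\<bar>Poly_Mapping.lookup f a * mpmonom a x\<bar> \<le> \<bar>Poly_Mapping.lookup f a\<bar>" for a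
    by (auto simp: abs_mult intro: mult_left_le)
  then show ?thesis
    unfolding mpeval_eq_sum_mpmonom by (intro order_trans[OF sum_abs] sum_mono)
qed

lemma abs_mpeval_le_supnorm: "x \<in> box \<Longrightarrow> \<bar>mpeval f x\<bar> \<le> supnorm f"
  unfolding supnorm_def
  by (rule cSUP_upper) (auto intro!: bdd_aboveI2 abs_mpeval_le_coeffs)

lemma supnorm_nonneg: "supnorm f \<ge> 0"
  using abs_mpeval_le_supnorm[of 0 f] by (simp add: box_def)

lemma bdd_below_mpeval: "S \<subseteq> box \<Longrightarrow> bdd_below (mpeval f ` S)"
  using abs_mpeval_le_supnorm[of _ f] by (intro bdd_belowI2[of _ "- supnorm f"]) force

definition line_poly :: "'n::finite mpoly \<Rightarrow> real^'n \<Rightarrow> real^'n \<Rightarrow> real poly" where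
  "line_poly f z v = (\<Sum>a\<in>Poly_Mapping.keys f. smult (Poly_Mapping.lookup f a)
      (\<Prod>i\<in>UNIV. [:z $ i, v $ i:] ^ Poly_Mapping.lookup a i))"

lemma poly_line_poly: "poly (line_poly f z v) t = mpeval f (z + t *\<^sub>R v)"
  by (simp add: line_poly_def mpeval_def poly_sum poly_prod algebra_simps)

lemma degree_line_poly_le: "degree (line_poly f z v) \<le> mpdeg f"
  unfolding line_poly_def
proof (rule degree_sum_le)
  fix a assume a: "a \<in> Poly_Mapping.keys f"
  have "degree (\<Prod>i\<in>UNIV. [:z $ i, v $ i:] ^ Poly_Mapping.lookup a i)
      \<le> (\<Sum>i\<in>UNIV. degree ([:z $ i, v $ i:] ^ Poly_Mapping.lookup a i))"
    using degree_prod_sum_le[of UNIV "\<lambda>i. [:z $ i, v $ i:] ^ Poly_Mapping.lookup a i"]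
    by (simp add: o_def)
  also have "\<dots> \<le> (\<Sum>i\<in>UNIV. Poly_Mapping.lookup a i)"
    by (intro sum_mono order_trans[OF degree_power_le]) simp
  also have "\<dots> = (\<Sum>i\<in>Poly_Mapping.keys a. Poly_Mapping.lookup a i)"
    by (rule sum.mono_neutral_right) (auto simp: in_keys_iff)
  also have "\<dots> \<le> mpdeg f"
    unfolding mpdeg_def using a by (intro Max_ge) auto
  finally show "degree (smult (Poly_Mapping.lookup f a)
      (\<Prod>i\<in>UNIV. [:z $ i, v $ i:] ^ Poly_Mapping.lookup a i)) \<le> mpdeg f"
    using degree_smult_le le_trans by blast
qed simp

lemma mpeval_differentiable: "mpeval f differentiable (at x)"
  unfolding differentiable_def mpeval_def[abs_def]
  by (intro exI; (rule derivative_eq_intros refl ballI bounded_linear_imp_has_derivative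
      bounded_linear_vec_nth)+)

lemma pderiv_line_poly:
  assumes D: "(mpeval f has_derivative D) (at (z + t *\<^sub>R v))"
  shows "poly (pderiv (line_poly f z v)) t = D v"
proof -
  have "((\<lambda>s. z + s *\<^sub>R v) has_derivative (\<lambda>s. s *\<^sub>R v)) (at t)"
    by (auto intro!: derivative_eq_intros)
  from has_derivative_compose[OF this D]
  have "((\<lambda>s. mpeval f (z + s *\<^sub>R v)) has_derivative (\<lambda>s. D (s *\<^sub>R v))) (at t)" .
  moreover have "(\<lambda>s. D (s *\<^sub>R v)) = (*) (D v)"
    using linear_scale[OF has_derivative_linear[OF D]] by (auto simp: fun_eq_iff)
  ultimately have "((\<lambda>s. mpeval f (z + s *\<^sub>R v)) has_field_derivative D v) (at t)"
    by (simp add: has_field_derivative_def)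
  moreover have "((\<lambda>s. mpeval f (z + s *\<^sub>R v)) has_field_derivative
      poly (pderiv (line_poly f z v)) t) (at t)"
    using poly_DERIV[of "line_poly f z v" t] by (simp add: poly_line_poly)
  ultimately show ?thesis by (rule DERIV_unique[rotated])
qed

lemma box_segment:
  assumes "x \<in> box" "y \<in> box" "0 \<le> t" "t \<le> 1"
  shows "x + t *\<^sub>R (y - x) \<in> box"
proof -
  have "\<bar>(1 - t) * x $ i + t * y $ i\<bar> \<le> 1" for i
  proof -
    have "\<bar>x $ i\<bar> \<le> 1" "\<bar>y $ i\<bar> \<le> 1" using assms(1,2) by (auto simp: box_def)
    then have "(1 - t) * x $ i + t * y $ i \<le> 1" "(1 - t) * (- x $ i) + t * (- y $ i) \<le> 1"
      using assms(3,4) by (intro convex_bound_le; simp add: abs_le_iff)+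
    then show ?thesis by (simp add: abs_le_iff)
  qed
  then show ?thesis by (simp add: box_def algebra_simps)
qed

lemma abs_derivative_mpeval_le:
  assumes z: "z \<in> box" and w: "w \<in> box" and D: "(mpeval f has_derivative D) (at z)"
  shows "\<bar>D w\<bar> \<le> 2 * real (mpdeg f) ^ 2 * supnorm f"
proof -
  have toward: "\<bar>D (u - z)\<bar> \<le> 2 * real (mpdeg f) ^ 2 * supnorm f" if u: "u \<in> box" for u
  proof -
    have "poly (pderiv (line_poly f z (u - z))) 0 = D (u - z)"
      by (rule pderiv_line_poly) (use D in simp)
    moreover have
      "\<bar>poly (pderiv (line_poly f z (u - z))) 0\<bar> \<le> 2 * real (mpdeg f) ^ 2 * supnorm f"
      using box_segment[OF z u] abs_mpeval_le_supnorm
      by (intro markov_inequality_unit_interval degree_line_poly_le) (auto simp: poly_line_poly)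
    ultimately show ?thesis by simp
  qed
  have "- w \<in> box" using w by (auto simp: box_def)
  have "2 * D w = D (w - z) - D (- w - z)"
    using linear_diff[OF has_derivative_linear[OF D], of "w - z" "- w - z"]
      linear_scale[OF has_derivative_linear[OF D], of 2 w]
    by (simp add: scaleR_2)
  with toward[OF w] toward[OF \<open>- w \<in> box\<close>] show ?thesis by linarith
qed

lemma mpeval_lipschitz_on_box:
  assumes x: "x \<in> box" and y: "y \<in> box"
  shows "\<bar>mpeval f x - mpeval f y\<bar> \<le> 2 * real (mpdeg f) ^ 2 * supnorm f * dist x y"
proof (cases "x = y")
  case False
  define e where "e = dist x y"
  have e: "e > 0" using False by (simp add: e_def)
  define w where "w = (1 / e) *\<^sub>R (x - y)"
  have "\<bar>(x - y) $ i\<bar> \<le> e" for i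
    unfolding e_def dist_norm by (rule component_le_norm_cart)
  then have w: "w \<in> box" using e by (simp add: box_def w_def abs_mult field_simps)
  obtain t where t: "0 < t" "t < 1"
    "mpeval f x - mpeval f y = poly (pderiv (line_poly f y (x - y))) t"
    using poly_MVT[of 0 1 "line_poly f y (x - y)"] by (auto simp: poly_line_poly)
  define z where "z = y + t *\<^sub>R (x - y)"
  have z: "z \<in> box" unfolding z_def using box_segment[OF y x] t by simp
  obtain D where D: "(mpeval f has_derivative D) (at z)"
    using mpeval_differentiable unfolding differentiable_def by blast
  have "mpeval f x - mpeval f y = D (x - y)"
    using t(3) pderiv_line_poly D by (simp add: z_def)
  also have "\<dots> = e * D w"
    using linear_scale[OF has_derivative_linear[OF D], of e w] e by (simp add: w_def)
  finally show ?thesis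
    using abs_derivative_mpeval_le[OF z w D] e by (simp add: abs_mult e_def mult.commute)
qed simp

lemma le_infdistI:
  assumes "A \<noteq> {}" "\<And>a. a \<in> A \<Longrightarrow> e \<le> dist x a"
  shows "e \<le> infdist x A"
  unfolding infdist_notempty[OF assms(1)] using assms by (intro cINF_greatest) auto

lemma infdist_ge_on_sublevel:
  assumes S: "S \<subseteq> box" "S \<noteq> {}"
    and m: "m > 0" "\<And>y. y \<in> S \<Longrightarrow> m \<le> mpeval f y"
    and x: "x \<in> box" "mpeval f x \<le> 3 * m / 4" and d: "mpdeg f > 0"
  shows "m / supnorm f / (8 * real (mpdeg f) ^ 2) \<le> infdist x S"
proof (rule le_infdistI[OF S(2)])
  fix y assume y: "y \<in> S"
  have "supnorm f > 0" using m abs_mpeval_le_supnorm[of y f] S(1) y by fastforce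
  have "m / 4 \<le> mpeval f y - mpeval f x" using m(2)[OF y] x(2) by simp
  also have "\<dots> \<le> 2 * real (mpdeg f) ^ 2 * supnorm f * dist x y"
    using mpeval_lipschitz_on_box[of y x f] y S(1) x(1) by (auto simp: dist_commute)
  finally show "m / supnorm f / (8 * real (mpdeg f) ^ 2) \<le> dist x y"
    using \<open>supnorm f > 0\<close> d by (simp add: field_simps)
qed

theorem mainTheorem9:
  fixes g :: "nat \<Rightarrow> 'n::finite mpoly" and r :: nat
    and f :: "'n mpoly" and c L :: real and d :: nat
  assumes archimedean: "1 - (\<Sum>i\<in>UNIV. mpvar i * mpvar i) \<in> qmodule g r"
    and gnorm: "\<forall>i<r. supnorm (g i) \<le> 1/2"
    and Sne: "basic_sa g r \<noteq> {}"
    and cpos: "c > 0" and Lpos: "L > 0"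
    and loj: "\<forall>x\<in>box. infdist x (basic_sa g r) powr L \<le> c * Gfun g r x"
    and deg: "mpdeg f = d"
    and fstar_pos: "(INF x\<in>basic_sa g r. mpeval f x) > 0"
    and bad: "\<exists>x\<in>box - basic_sa g r. mpeval f x \<le> 0"
  shows "\<forall>x\<in>{x\<in>box. mpeval f x \<le> 3 * (INF y\<in>basic_sa g r. mpeval f y) / 4}.
           Gfun g r x \<ge> (1/c) * (((INF y\<in>basic_sa g r. mpeval f y) / supnorm f) / (8 * real d ^ 2)) powr L"
proof (intro ballI)
  let ?S = "basic_sa g r" and ?fstar = "INF y\<in>basic_sa g r. mpeval f y"
  define \<delta> where "\<delta> = (?fstar / supnorm f) / (8 * real d ^ 2)"
  fix x assume "x \<in> {x\<in>box. mpeval f x \<le> 3 * ?fstar / 4}"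
  then have x: "x \<in> box" "mpeval f x \<le> 3 * ?fstar / 4" by auto
  have S_box: "?S \<subseteq> box" by (rule basic_sa_subset_box[OF archimedean])
  have fstar_le: "?fstar \<le> mpeval f y" if "y \<in> ?S" for y
    using that S_box by (intro cINF_lower bdd_below_mpeval)
  (* for d = 0 the bound is 0, by the convention x / 0 = 0 *)
  have "\<delta> \<le> infdist x ?S"
    using infdist_ge_on_sublevel[OF S_box Sne fstar_pos fstar_le x] deg
    by (cases "d = 0") (auto simp: \<delta>_def infdist_nonneg)
  moreover have "\<delta> \<ge> 0" using fstar_pos supnorm_nonneg[of f] by (simp add: \<delta>_def)
  ultimately have "\<delta> powr L \<le> infdist x ?S powr L" by (intro powr_mono2) (use Lpos in auto)
  also have "\<dots> \<le> c * Gfun g r x" using loj x(1) by simp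
  finally have "\<delta> powr L \<le> c * Gfun g r x" .
  then show "Gfun g r x \<ge> (1/c) * ((?fstar / supnorm f) / (8 * real d ^ 2)) powr L"
    using cpos unfolding \<delta>_def[symmetric] by (simp add: field_simps)
qed

end
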